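(* Let $\mathcal H=\mathbb C^d$ with orthonormal basis $\{|k\rangle\}_{k=1}^d$. A quantum channel $\mathcal M$ on $M_d(\mathbb C)$ is multiphase covariant if and only if it admits a representation $$\mathcal M(\rho)=\sum_{i=1}^r M_i\rho M_i^\dagger+\sum_{k=1}^d\sum_{j\neq k}p(j|k)\,|j\rangle\langle k|\rho|k\rangle\langle j|,$$ where each $M_i$ is diagonal in the basis $\{|k\rangle\}$ and each $p(j|k)\ge0$.
   Context: For $\boldsymbol\theta\in[0,2\pi)^d$ let $U_{\boldsymbol\theta}=\sum_k e^{i\theta_k}|k\rangle\langle k|$ and $\mathcal U_{\boldsymbol\theta}=U_{\boldsymbol\theta}\cdot U_{\boldsymbol\theta}^\dagger$. A quantum channel $\mathcal M$ is multiphase covariant if $\mathcal U_{\boldsymbol\theta}\circ\mathcal M=\mathcal M\circ\mathcal U_{\boldsymbol\theta}$ for all $\boldsymbol\theta$. *)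

theory Defs
  imports "Jordan_Normal_Form.Matrix" Complex_Main
begin

text \<open>Matrices in M_d(C) are complex d x d matrices (carrier_mat d d); the
basis vector |k> corresponds to index k (0-based, k < d).\<close>

definition dag :: "complex mat \<Rightarrow> complex mat" where
  "dag A = mat (dim_col A) (dim_row A) (\<lambda>(i,j). cnj (A $$ (j,i)))"

definition mtrace :: "complex mat \<Rightarrow> complex" where
  "mtrace A = (\<Sum>i<dim_row A. A $$ (i,i))"

definition msum :: "nat \<Rightarrow> ('i \<Rightarrow> complex mat) \<Rightarrow> 'i set \<Rightarrow> complex mat" where
  "msum d f I = mat d d (\<lambda>(a,b). \<Sum>x\<in>I. f x $$ (a,b))"

definition ketbra :: "nat \<Rightarrow> nat \<Rightarrow> nat \<Rightarrow> complex mat" where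
  "ketbra d j k = mat d d (\<lambda>(a,b). if a = j \<and> b = k then 1 else 0)"

definition psd :: "nat \<Rightarrow> complex mat \<Rightarrow> bool" where
  "psd n A \<longleftrightarrow> A \<in> carrier_mat n n \<and>
     (\<forall>v :: nat \<Rightarrow> complex. let q = (\<Sum>i<n. \<Sum>j<n. cnj (v i) * A $$ (i,j) * v j)
        in Im q = 0 \<and> Re q \<ge> 0)"

text \<open>id_n \<otimes> \<Phi> acting on an (n d) x (n d) block matrix with d x d blocks.\<close>
definition ampl :: "nat \<Rightarrow> nat \<Rightarrow> (complex mat \<Rightarrow> complex mat) \<Rightarrow> complex mat \<Rightarrow> complex mat" where
  "ampl n d \<Phi> X = mat (n*d) (n*d) (\<lambda>(r,c).
      \<Phi> (mat d d (\<lambda>(i,j). X $$ ((r div d)*d + i, (c div d)*d + j))) $$ (r mod d, c mod d))"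

definition linear_map :: "nat \<Rightarrow> (complex mat \<Rightarrow> complex mat) \<Rightarrow> bool" where
  "linear_map d \<Phi> \<longleftrightarrow>
     (\<forall>A\<in>carrier_mat d d. \<forall>B\<in>carrier_mat d d. \<Phi> (A + B) = \<Phi> A + \<Phi> B) \<and>
     (\<forall>A\<in>carrier_mat d d. \<forall>c::complex. \<Phi> (c \<cdot>\<^sub>m A) = c \<cdot>\<^sub>m \<Phi> A)"

definition completely_positive :: "nat \<Rightarrow> (complex mat \<Rightarrow> complex mat) \<Rightarrow> bool" where
  "completely_positive d \<Phi> \<longleftrightarrow>
     (\<forall>n>0. \<forall>X. psd (n*d) X \<longrightarrow> psd (n*d) (ampl n d \<Phi> X))"

definition quantum_channel :: "nat \<Rightarrow> (complex mat \<Rightarrow> complex mat) \<Rightarrow> bool" where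
  "quantum_channel d \<Phi> \<longleftrightarrow>
     (\<forall>A\<in>carrier_mat d d. \<Phi> A \<in> carrier_mat d d) \<and>
     linear_map d \<Phi> \<and> completely_positive d \<Phi> \<and>
     (\<forall>A\<in>carrier_mat d d. mtrace (\<Phi> A) = mtrace A)"

definition phaseU :: "nat \<Rightarrow> (nat \<Rightarrow> real) \<Rightarrow> complex mat" where
  "phaseU d \<theta> = mat d d (\<lambda>(a,b). if a = b then cis (\<theta> a) else 0)"

definition multiphase_covariant :: "nat \<Rightarrow> (complex mat \<Rightarrow> complex mat) \<Rightarrow> bool" where
  "multiphase_covariant d \<Phi> \<longleftrightarrow>
     (\<forall>\<theta>. (\<forall>k<d. 0 \<le> \<theta> k \<and> \<theta> k < 2*pi) \<longrightarrow>
        (\<forall>\<rho>\<in>carrier_mat d d.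
           phaseU d \<theta> * \<Phi> \<rho> * dag (phaseU d \<theta>) = \<Phi> (phaseU d \<theta> * \<rho> * dag (phaseU d \<theta>))))"

end

theory Submission
  imports Defs
begin

text \<open>Conjugation by \<open>U\<^sub>\<theta>\<close> multiplies the \<open>(i,j)\<close> entry of a matrix by
  \<open>exp (\<i> (\<theta> i - \<theta> j))\<close>. For a covariant channel \<open>\<M>\<close> the image of \<open>|a\<rangle>\<langle>b|\<close> must transform
  with the same character as \<open>|a\<rangle>\<langle>b|\<close>, so it is supported on the entry \<open>(a,b)\<close> when \<open>a \<noteq> b\<close> and on
  the diagonal when \<open>a = b\<close>. Hence \<open>\<M>\<close> is a Schur multiplier \<open>\<rho> \<mapsto> S \<circ> \<rho>\<close> with
  \<open>S a b = \<M>(|a\<rangle>\<langle>b|)\<^sub>a\<^sub>b\<close>, plus populations \<open>\<rho>\<^sub>k\<^sub>k\<close> moved to the diagonal with weights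
  \<open>p(j|k) = \<M>(|k\<rangle>\<langle>k|)\<^sub>j\<^sub>j\<close>. Both \<open>S\<close> and the \<open>p(j|k)\<close> are read off the Choi matrix, which complete
  positivity makes positive semidefinite: \<open>p(j|k)\<close> are diagonal entries, hence nonnegative, and \<open>S\<close> is a
  principal submatrix, hence a Gram matrix \<open>S a b = \<Sum>\<^sub>i m\<^sub>i a * cnj (m\<^sub>i b)\<close> (by induction on the
  dimension via Schur complements); the Kraus operators are \<open>diag m\<^sub>i\<close>. Conversely, every operator of
  this shape commutes with conjugation by diagonal unitaries.\<close>

section \<open>Positive semidefinite kernels\<close>

definition quad_form :: "nat \<Rightarrow> (nat \<Rightarrow> nat \<Rightarrow> complex) \<Rightarrow> (nat \<Rightarrow> complex) \<Rightarrow> complex" where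
  "quad_form n A v = (\<Sum>i<n. \<Sum>j<n. cnj (v i) * A i j * v j)"

definition psd_kernel :: "nat \<Rightarrow> (nat \<Rightarrow> nat \<Rightarrow> complex) \<Rightarrow> bool" where
  "psd_kernel n A \<longleftrightarrow> (\<forall>v. Im (quad_form n A v) = 0 \<and> Re (quad_form n A v) \<ge> 0)"

definition gram_kernel :: "nat \<Rightarrow> (nat \<Rightarrow> nat \<Rightarrow> complex) \<Rightarrow> bool" where
  "gram_kernel n A \<longleftrightarrow> (\<exists>(r::nat) m. \<forall>a<n. \<forall>b<n. A a b = (\<Sum>i<r. m i a * cnj (m i b)))"

lemma psd_iff_psd_kernel: "psd n A \<longleftrightarrow> A \<in> carrier_mat n n \<and> psd_kernel n (\<lambda>i j. A $$ (i,j))"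
  unfolding psd_def psd_kernel_def quad_form_def Let_def by blast

lemma sum_lessThan_single:
  assumes "k < (n::nat)" "\<And>t. t < n \<Longrightarrow> t \<noteq> k \<Longrightarrow> f t = (0::'a::comm_monoid_add)"
  shows "(\<Sum>t<n. f t) = f k"
  using assms by (subst sum.mono_neutral_right[of "{..<n}" "{k}"]) auto

lemma sum_lessThan_image:
  fixes m n :: nat
  assumes inj: "inj_on f {..<m}" and img: "f ` {..<m} \<subseteq> {..<n}"
    and zero: "\<And>r. r < n \<Longrightarrow> r \<notin> f ` {..<m} \<Longrightarrow> g r = (0::'a::comm_monoid_add)"
  shows "(\<Sum>r<n. g r) = (\<Sum>a<m. g (f a))"
proof -
  have "(\<Sum>r<n. g r) = sum g (f ` {..<m})"
    by (rule sum.mono_neutral_right) (use img zero in auto)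
  also have "\<dots> = (\<Sum>a<m. g (f a))"
    by (simp add: sum.reindex[OF inj])
  finally show ?thesis .
qed

lemma sum_mult_indicator_right:
  "(\<Sum>j<(n::nat). f j * (if j = a then x else 0)) = (if a < n then f a * x else (0::complex))"
  by (simp add: if_distrib[of "\<lambda>t. _ * t"] cong: if_cong)

lemma sum_mult_indicator_left:
  "(\<Sum>j<(n::nat). (if j = a then x else 0) * f j) = (if a < n then x * f a else (0::complex))"
  by (simp add: if_distrib[of "\<lambda>t. t * _"] cong: if_cong)

lemma quad_form_single:
  assumes "a < n"
  shows "quad_form n A (\<lambda>i. if i = a then x else 0) = cnj x * A a a * x"
proof -
  have "cnj (if i = a then x else 0) = (if i = a then cnj x else 0)" for i by auto
  then show ?thesis unfolding quad_form_def using assms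
    by (simp add: sum_mult_indicator_right sum_mult_indicator_left
        sum_distrib_left[symmetric] sum_distrib_right[symmetric] mult.assoc)
qed

lemma quad_form_pair:
  assumes "a < n" "b < n" "a \<noteq> b"
  shows "quad_form n A (\<lambda>i. if i = a then x else if i = b then y else 0) =
     cnj x * A a a * x + cnj x * A a b * y + cnj y * A b a * x + cnj y * A b b * y"
proof -
  have v: "(\<lambda>i. if i = a then x else if i = b then y else 0) =
      (\<lambda>i. (if i = a then x else 0) + (if i = b then y else 0))"
    using assms by auto
  have c: "cnj ((if i = a then x else 0) + (if i = b then y else 0)) =
      (if i = a then cnj x else 0) + (if i = b then cnj y else 0)" for i
    by auto
  have inner: "(\<Sum>j<n. c * A i j * ((if j = a then x else 0) + (if j = b then y else 0))) =
      c * (A i a * x + A i b * y)" for c i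
    using assms by (simp add: distrib_left sum.distrib sum_mult_indicator_right)
  have outer: "(\<Sum>i<n. ((if i = a then cnj x else 0) + (if i = b then cnj y else 0)) * g i) =
      cnj x * g a + cnj y * g b" for g
    using assms by (simp add: distrib_right sum.distrib sum_mult_indicator_left)
  show ?thesis
    unfolding quad_form_def v c inner outer by (simp add: algebra_simps)
qed

lemma quad_form_cong: "(\<And>i. i < n \<Longrightarrow> v i = w i) \<Longrightarrow> quad_form n A v = quad_form n A w"
  unfolding quad_form_def by (intro sum.cong refl) auto

lemma psd_kernel_cong:
  assumes "psd_kernel n A" "\<And>i j. i < n \<Longrightarrow> j < n \<Longrightarrow> A i j = B i j"
  shows "psd_kernel n B"
proof -
  have "quad_form n A v = quad_form n B v" for v
    unfolding quad_form_def using assms(2) by (intro sum.cong refl) auto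
  then show ?thesis using assms(1) unfolding psd_kernel_def by simp
qed

lemma quad_form_Suc:
  "quad_form (Suc n) A v = quad_form n A v + cnj (v n) * (\<Sum>j<n. A n j * v j)
     + (\<Sum>i<n. cnj (v i) * A i n) * v n + cnj (v n) * A n n * v n"
  unfolding quad_form_def by (simp add: sum.distrib sum_distrib_left sum_distrib_right algebra_simps)

lemma psd_kernel_diag:
  assumes "psd_kernel n A" "a < n"
  shows "Im (A a a) = 0" "Re (A a a) \<ge> 0"
  using assms(1) quad_form_single[OF assms(2), of A 1] unfolding psd_kernel_def
  by (metis mult_1 mult_1_right complex_cnj_one)+

lemma psd_kernel_hermitian:
  assumes "psd_kernel n A" "a < n" "b < n"
  shows "A a b = cnj (A b a)"
proof (cases "a = b")
  case True
  then show ?thesis using psd_kernel_diag(1)[OF assms(1,2)] by (simp add: complex_eq_iff)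
next
  case False
  have "Im (quad_form n A (\<lambda>i. if i = a then 1 else if i = b then 1 else 0)) = 0"
    "Im (quad_form n A (\<lambda>i. if i = a then 1 else if i = b then \<i> else 0)) = 0"
    using assms unfolding psd_kernel_def by blast+
  then show ?thesis
    using quad_form_pair[OF assms(2,3) False, of A]
      psd_kernel_diag(1)[OF assms(1,2)] psd_kernel_diag(1)[OF assms(1,3)]
    by (simp add: complex_eq_iff)
qed

lemma psd_kernel_zero_row:
  assumes "psd_kernel n A" "a < n" "b < n" "A a a = 0"
  shows "A a b = 0"
proof (rule ccontr)
  assume nz: "A a b \<noteq> 0"
  then have ab: "a \<noteq> b" using assms by auto
  define z where "z = A a b"
  define N where "N = (Re z)^2 + (Im z)^2"
  have N_pos: "N > 0"
    using nz unfolding N_def z_def by (simp add: complex_eq_iff sum_power2_gt_zero_iff)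
  \<comment> \<open>The test vector \<open>t e\<^sub>a + e\<^sub>b\<close> with \<open>t = - s z\<close> gives \<open>A b b - 2 s |z|\<^sup>2\<close>, negative for large \<open>s\<close>.\<close>
  define s where "s = (\<bar>Re (A b b)\<bar> + 1) / (2 * N)"
  define t where "t = - (complex_of_real s) * z"
  have hba: "A b a = cnj z" using psd_kernel_hermitian[OF assms(1,3,2)] unfolding z_def by simp
  have "Re (quad_form n A (\<lambda>i. if i = a then t else if i = b then 1 else 0)) \<ge> 0"
    using assms unfolding psd_kernel_def by blast
  also have "Re (quad_form n A (\<lambda>i. if i = a then t else if i = b then 1 else 0)) =
      Re (A b b) - 2 * s * N"
    unfolding quad_form_pair[OF assms(2,3) ab] hba assms(4) t_def N_def z_def[symmetric]
    by (simp add: algebra_simps power2_eq_square)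
  also have "2 * s * N = \<bar>Re (A b b)\<bar> + 1" unfolding s_def using N_pos by simp
  finally show False by linarith
qed

lemma psd_kernel_reindex:
  assumes psd: "psd_kernel n C" and inj: "inj_on f {..<m}" and img: "f ` {..<m} \<subseteq> {..<n}"
  shows "psd_kernel m (\<lambda>a b. C (f a) (f b))"
  unfolding psd_kernel_def
proof
  fix w :: "nat \<Rightarrow> complex"
  define v where "v r = (if r \<in> f ` {..<m} then w (the_inv_into {..<m} f r) else 0)" for r
  have v_f: "v (f a) = w a" if "a < m" for a
    unfolding v_def using that inj by (simp add: the_inv_into_f_f)
  have inner: "(\<Sum>j<n. cnj (v i) * C i j * v j) = (\<Sum>b<m. cnj (v i) * C i (f b) * v (f b))" for i
    by (rule sum_lessThan_image[OF inj img]) (simp add: v_def)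
  have "quad_form n C v = (\<Sum>a<m. \<Sum>b<m. cnj (v (f a)) * C (f a) (f b) * v (f b))"
    unfolding quad_form_def inner by (rule sum_lessThan_image[OF inj img]) (simp add: v_def)
  also have "\<dots> = quad_form m (\<lambda>a b. C (f a) (f b)) w"
    unfolding quad_form_def by (intro sum.cong refl) (simp add: v_f)
  finally show "Im (quad_form m (\<lambda>a b. C (f a) (f b)) w) = 0 \<and>
      Re (quad_form m (\<lambda>a b. C (f a) (f b)) w) \<ge> 0"
    using psd unfolding psd_kernel_def by metis
qed

lemma psd_kernel_Suc_restrict: "psd_kernel (Suc n) A \<Longrightarrow> psd_kernel n A"
  using psd_kernel_reindex[of "Suc n" A id n] by auto

lemma psd_kernel_schur_complement:
  assumes psd: "psd_kernel (Suc n) A" and c: "A n n \<noteq> 0"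
  shows "psd_kernel n (\<lambda>a b. A a b - A a n * A n b / A n n)"
  unfolding psd_kernel_def
proof
  fix v
  let ?c = "A n n"
  let ?B = "\<lambda>a b. A a b - A a n * A n b / A n n"
  have c_real: "cnj ?c = ?c" using psd_kernel_diag(1)[OF psd, of n] by (simp add: complex_eq_iff)
  define s where "s = (\<Sum>j<n. A n j * v j)"
  have col: "(\<Sum>i<n. cnj (v i) * A i n) = cnj s"
    unfolding s_def cnj_sum
    by (intro sum.cong refl) (simp add: psd_kernel_hermitian[OF psd, of _ n] mult.commute)
  \<comment> \<open>Extending \<open>v\<close> by the minimising last coordinate realises the Schur complement.\<close>
  define w where "w = v(n := - s / ?c)"
  have "quad_form (Suc n) A w = quad_form n A v - cnj s * s / ?c"
  proof -
    have "(\<Sum>i<n. cnj (w i) * A i n) = cnj s"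
      unfolding w_def col[symmetric] by (intro sum.cong refl) simp
    moreover have "(\<Sum>j<n. A n j * w j) = s"
      unfolding w_def s_def by (intro sum.cong refl) simp
    moreover have "quad_form n A w = quad_form n A v" unfolding w_def by (rule quad_form_cong) simp
    ultimately show ?thesis unfolding quad_form_Suc using c c_real by (simp add: w_def field_simps)
  qed
  moreover have "quad_form n ?B v = quad_form n A v - cnj s * s / ?c"
  proof -
    have "quad_form n ?B v =
        quad_form n A v - (\<Sum>i<n. \<Sum>j<n. (cnj (v i) * A i n) * (A n j * v j) / ?c)"
      unfolding quad_form_def by (simp add: sum_subtractf[symmetric] algebra_simps)
    also have "(\<Sum>i<n. \<Sum>j<n. (cnj (v i) * A i n) * (A n j * v j) / ?c) =
        (\<Sum>i<n. cnj (v i) * A i n) * s / ?c"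
      unfolding s_def by (simp add: sum_divide_distrib[symmetric] sum_product)
    finally show ?thesis unfolding col .
  qed
  moreover have "Im (quad_form (Suc n) A w) = 0 \<and> Re (quad_form (Suc n) A w) \<ge> 0"
    using psd unfolding psd_kernel_def by blast
  ultimately show "Im (quad_form n ?B v) = 0 \<and> Re (quad_form n ?B v) \<ge> 0" by simp
qed

lemma psd_kernel_split_rank_one:
  assumes psd: "psd_kernel (Suc n) A"
  shows "\<exists>B m0. psd_kernel n B \<and>
    (\<forall>a<Suc n. \<forall>b<Suc n. A a b = (if a < n \<and> b < n then B a b else 0) + m0 a * cnj (m0 b))"
proof (cases "A n n = 0")
  case True
  have row: "A n b = 0" if "b < Suc n" for b
    using psd_kernel_zero_row[OF psd _ that True] by simp
  have col: "A b n = 0" if "b < Suc n" for b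
    using psd_kernel_hermitian[OF psd that, of n] row[OF that] by simp
  show ?thesis
  proof (intro exI[of _ A] exI[of _ "\<lambda>_. 0"] conjI allI impI)
    show "psd_kernel n A" by (rule psd_kernel_Suc_restrict[OF psd])
    fix a b assume "a < Suc n" "b < Suc n"
    then show "A a b = (if a < n \<and> b < n then A a b else 0) + 0 * cnj 0"
      using row col by (cases "a = n"; cases "b = n") auto
  qed
next
  case False
  let ?c = "A n n"
  have c_pos: "Re ?c > 0" and c_real: "?c = complex_of_real (Re ?c)"
    using psd_kernel_diag[OF psd, of n] False by (auto simp: complex_eq_iff)
  define m0 where "m0 a = A a n / complex_of_real (sqrt (Re ?c))" for a
  have m0: "m0 a * cnj (m0 b) = A a n * A n b / ?c" if "b < Suc n" for a b
  proof -
    have "cnj (A b n) = A n b" using psd_kernel_hermitian[OF psd _ that, of n] by simp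
    moreover have "complex_of_real (sqrt (Re ?c)) * complex_of_real (sqrt (Re ?c)) = ?c"
      using c_pos c_real by (simp flip: of_real_mult)
    ultimately show ?thesis unfolding m0_def by (simp add: field_simps)
  qed
  show ?thesis
  proof (intro exI[of _ "\<lambda>a b. A a b - A a n * A n b / ?c"] exI[of _ m0] conjI allI impI)
    show "psd_kernel n (\<lambda>a b. A a b - A a n * A n b / ?c)"
      by (rule psd_kernel_schur_complement[OF psd False])
    fix a b assume "a < Suc n" "b < Suc n"
    then show "A a b =
        (if a < n \<and> b < n then A a b - A a n * A n b / ?c else 0) + m0 a * cnj (m0 b)"
      using False unfolding m0[OF \<open>b < Suc n\<close>] by (cases "a = n"; cases "b = n") auto
  qed
qed

lemma gram_kernel_add_rank_one:
  assumes "gram_kernel n B"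
    and A: "\<forall>a<Suc n. \<forall>b<Suc n. A a b = (if a < n \<and> b < n then B a b else 0) + m0 a * cnj (m0 b)"
  shows "gram_kernel (Suc n) A"
proof -
  obtain r :: nat and m where B: "\<forall>a<n. \<forall>b<n. B a b = (\<Sum>i<r. m i a * cnj (m i b))"
    using assms(1) unfolding gram_kernel_def by blast
  define mm where "mm i a = (if i < r then (if a < n then m i a else 0) else m0 a)" for i a
  have "A a b = (\<Sum>i<Suc r. mm i a * cnj (mm i b))" if "a < Suc n" "b < Suc n" for a b
  proof -
    have "(\<Sum>i<r. mm i a * cnj (mm i b)) = (if a < n \<and> b < n then B a b else 0)"
    proof (cases "a < n \<and> b < n")
      case True
      then show ?thesis using B by (simp add: mm_def)
    next
      case False
      then show ?thesis by (auto simp: mm_def intro: sum.neutral)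
    qed
    then show ?thesis using A that by (simp add: mm_def)
  qed
  then show ?thesis unfolding gram_kernel_def by (intro exI[of _ "Suc r"] exI[of _ mm]) blast
qed

theorem psd_kernel_gram: "psd_kernel n A \<Longrightarrow> gram_kernel n A"
proof (induction n arbitrary: A)
  case 0
  show ?case unfolding gram_kernel_def by simp
next
  case (Suc n A)
  obtain B m0 where B: "psd_kernel n B"
    and A: "\<forall>a<Suc n. \<forall>b<Suc n. A a b = (if a < n \<and> b < n then B a b else 0) + m0 a * cnj (m0 b)"
    using psd_kernel_split_rank_one[OF Suc.prems] by (elim exE conjE) (rule that)
  from gram_kernel_add_rank_one[OF Suc.IH[OF B] A] show ?case .
qed

lemma mult_mat_entry:
  assumes "A \<in> carrier_mat d d" "B \<in> carrier_mat d d" "i < d" "j < d"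
  shows "(A * B) $$ (i,j) = (\<Sum>t<d. A $$ (i,t) * B $$ (t,j))"
  using assms by (simp add: scalar_prod_def atLeast0LessThan)

lemma dag_carrier [simp]: "A \<in> carrier_mat n m \<Longrightarrow> dag A \<in> carrier_mat m n"
  unfolding dag_def by simp

lemma dag_dims [simp]: "dim_row (dag A) = dim_col A" "dim_col (dag A) = dim_row A"
  unfolding dag_def by simp_all

lemma dag_entry: "A \<in> carrier_mat n m \<Longrightarrow> i < m \<Longrightarrow> j < n \<Longrightarrow> dag A $$ (i,j) = cnj (A $$ (j,i))"
  unfolding dag_def by simp

lemma ketbra_carrier [simp]: "ketbra d j k \<in> carrier_mat d d"
  unfolding ketbra_def by simp

lemma ketbra_dims [simp]: "dim_row (ketbra d j k) = d" "dim_col (ketbra d j k) = d"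
  unfolding ketbra_def by simp_all

lemma ketbra_entry: "a < d \<Longrightarrow> b < d \<Longrightarrow> ketbra d j k $$ (a,b) = (if a = j \<and> b = k then 1 else 0)"
  unfolding ketbra_def by simp

lemma phaseU_carrier [simp]: "phaseU d \<theta> \<in> carrier_mat d d"
  unfolding phaseU_def by simp

lemma phaseU_dims [simp]: "dim_row (phaseU d \<theta>) = d" "dim_col (phaseU d \<theta>) = d"
  unfolding phaseU_def by simp_all

lemma phaseU_diagonal: "diagonal_mat (phaseU d \<theta>)"
  unfolding phaseU_def diagonal_mat_def by simp

lemma msum_carrier [simp]: "msum d f I \<in> carrier_mat d d"
  unfolding msum_def by simp

lemma msum_dims [simp]: "dim_row (msum d f I) = d" "dim_col (msum d f I) = d"
  unfolding msum_def by simp_all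

lemma msum_entry: "a < d \<Longrightarrow> b < d \<Longrightarrow> msum d f I $$ (a,b) = (\<Sum>x\<in>I. f x $$ (a,b))"
  unfolding msum_def by simp

lemma msum_empty: "msum d f {} = 0\<^sub>m d d"
  unfolding msum_def by (rule eq_matI) auto

lemma msum_insert:
  assumes "finite F" "x \<notin> F" "f x \<in> carrier_mat d d"
  shows "msum d f (insert x F) = f x + msum d f F"
  using assms by (intro eq_matI) (auto simp: msum_entry)

lemma diagonal_conj_entry:
  assumes D: "D \<in> carrier_mat d d" "diagonal_mat D" and R: "\<rho> \<in> carrier_mat d d"
    and ij: "i < d" "j < d"
  shows "(D * \<rho> * dag D) $$ (i,j) = D $$ (i,i) * \<rho> $$ (i,j) * cnj (D $$ (j,j))"
proof -
  have D_off: "D $$ (a,b) = 0" if "a < d" "b < d" "a \<noteq> b" for a b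
    using D that unfolding diagonal_mat_def by auto
  have left: "(D * \<rho>) $$ (i,t) = D $$ (i,i) * \<rho> $$ (i,t)" if "t < d" for t
    unfolding mult_mat_entry[OF D(1) R ij(1) that]
    by (rule sum_lessThan_single[OF ij(1)]) (simp add: D_off ij)
  have "(D * \<rho> * dag D) $$ (i,j) = (\<Sum>t<d. (D * \<rho>) $$ (i,t) * dag D $$ (t,j))"
    by (rule mult_mat_entry) (use D R ij in auto)
  also have "\<dots> = (\<Sum>t<d. D $$ (i,i) * \<rho> $$ (i,t) * cnj (D $$ (j,t)))"
    by (intro sum.cong refl) (simp add: left dag_entry[OF D(1)] ij)
  also have "\<dots> = D $$ (i,i) * \<rho> $$ (i,j) * cnj (D $$ (j,j))"
    by (rule sum_lessThan_single[OF ij(2)]) (simp add: D_off ij)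
  finally show ?thesis .
qed

lemma phaseU_conj_entry:
  assumes "\<rho> \<in> carrier_mat d d" "i < d" "j < d"
  shows "(phaseU d \<theta> * \<rho> * dag (phaseU d \<theta>)) $$ (i,j) = cis (\<theta> i) * \<rho> $$ (i,j) * cnj (cis (\<theta> j))"
  using diagonal_conj_entry[OF phaseU_carrier phaseU_diagonal assms, of \<theta>] assms(2,3)
  by (simp add: phaseU_def)

lemma phaseU_conj_carrier [simp]:
  "\<rho> \<in> carrier_mat d d \<Longrightarrow> phaseU d \<theta> * \<rho> * dag (phaseU d \<theta>) \<in> carrier_mat d d"
  by (metis dag_carrier mult_carrier_mat phaseU_carrier)

lemma ketbra_conj_entry:
  assumes R: "\<rho> \<in> carrier_mat d d" and "j < d" "k < d" "a < d" "b < d"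
  shows "(ketbra d j k * \<rho> * ketbra d k j) $$ (a,b) = (if a = j \<and> b = j then \<rho> $$ (k,k) else 0)"
proof -
  have left: "(ketbra d j k * \<rho>) $$ (a,t) = (if a = j then \<rho> $$ (k,t) else 0)" if "t < d" for t
    unfolding mult_mat_entry[OF ketbra_carrier R assms(4) that]
    by (rule trans[OF sum_lessThan_single[OF assms(3)]]) (simp_all add: ketbra_entry assms)
  have "(ketbra d j k * \<rho> * ketbra d k j) $$ (a,b) =
      (\<Sum>t<d. (ketbra d j k * \<rho>) $$ (a,t) * ketbra d k j $$ (t,b))"
    by (rule mult_mat_entry[OF mult_carrier_mat[OF ketbra_carrier R] ketbra_carrier assms(4,5)])
  also have "\<dots> = (\<Sum>t<d. (if a = j then \<rho> $$ (k,t) else 0) * (if t = k \<and> b = j then 1 else 0))"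
    by (intro sum.cong refl) (simp add: left ketbra_entry assms)
  also have "\<dots> = (if a = j then \<rho> $$ (k,k) else 0) * (if k = k \<and> b = j then 1 else 0)"
    by (rule sum_lessThan_single[OF assms(3)]) simp
  finally show ?thesis by simp
qed

lemma sum_lessThan_if_neq:
  "(\<Sum>k<(n::nat). if k \<noteq> a then f k else (0::'a::comm_monoid_add)) = (\<Sum>k\<in>{..<n} - {a}. f k)"
proof -
  have "{k\<in>{..<n}. k \<noteq> a} = {..<n} - {a}" by auto
  then show ?thesis using sum.inter_filter[of "{..<n}" f "\<lambda>k. k \<noteq> a"] by simp
qed

lemma linear_map_zero:
  assumes "linear_map d M" "\<forall>A\<in>carrier_mat d d. M A \<in> carrier_mat d d"
  shows "M (0\<^sub>m d d) = 0\<^sub>m d d"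
proof -
  have "M (0\<^sub>m d d) = M (0 \<cdot>\<^sub>m 0\<^sub>m d d)" by (metis smult_zero_mat)
  also have "\<dots> = 0 \<cdot>\<^sub>m M (0\<^sub>m d d)"
    using assms(1) zero_carrier_mat unfolding linear_map_def by blast
  also have "\<dots> = 0\<^sub>m d d"
  proof -
    have "M (0\<^sub>m d d) \<in> carrier_mat d d" using assms(2) by simp
    then show ?thesis by (intro eq_matI) auto
  qed
  finally show ?thesis .
qed

lemma linear_map_msum:
  assumes L: "linear_map d M" and C: "\<forall>A\<in>carrier_mat d d. M A \<in> carrier_mat d d"
    and "finite F" "\<forall>x\<in>F. f x \<in> carrier_mat d d"
  shows "M (msum d f F) = msum d (\<lambda>x. M (f x)) F"
  using assms(3,4)
proof (induction F rule: finite_induct)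
  case empty
  then show ?case using linear_map_zero[OF L C] by (simp add: msum_empty)
next
  case (insert x F)
  have fx: "f x \<in> carrier_mat d d" using insert by simp
  have "M (msum d f (insert x F)) = M (f x + msum d f F)"
    using msum_insert[where f=f, OF insert(1,2) fx] by simp
  also have "\<dots> = M (f x) + msum d (\<lambda>x. M (f x)) F"
    using L fx insert unfolding linear_map_def by simp
  also have "\<dots> = msum d (\<lambda>x. M (f x)) (insert x F)"
    using msum_insert[OF insert(1,2), of "\<lambda>x. M (f x)"] C fx by simp
  finally show ?case .
qed

lemma msum_ketbra_expansion:
  assumes "\<rho> \<in> carrier_mat d d"
  shows "\<rho> = msum d (\<lambda>(a,b). \<rho> $$ (a,b) \<cdot>\<^sub>m ketbra d a b) ({..<d} \<times> {..<d})"
proof (rule eq_matI)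
  fix i j assume "i < dim_row (msum d (\<lambda>(a,b). \<rho> $$ (a,b) \<cdot>\<^sub>m ketbra d a b) ({..<d} \<times> {..<d}))"
    "j < dim_col (msum d (\<lambda>(a,b). \<rho> $$ (a,b) \<cdot>\<^sub>m ketbra d a b) ({..<d} \<times> {..<d}))"
  then have i: "i < d" and j: "j < d" by auto
  have "msum d (\<lambda>(a,b). \<rho> $$ (a,b) \<cdot>\<^sub>m ketbra d a b) ({..<d} \<times> {..<d}) $$ (i,j)
     = (\<Sum>a<d. \<Sum>b<d. \<rho> $$ (a,b) * (if i = a \<and> j = b then 1 else 0))"
    unfolding msum_entry[OF i j] sum.cartesian_product
    by (intro sum.cong refl) (clarsimp simp: ketbra_entry i j)
  also have "\<dots> = \<rho> $$ (i,j)"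
    by (subst sum_lessThan_single[OF i]; simp) (subst sum_lessThan_single[OF j]; simp)
  finally show "\<rho> $$ (i,j) = msum d (\<lambda>(a,b). \<rho> $$ (a,b) \<cdot>\<^sub>m ketbra d a b) ({..<d} \<times> {..<d}) $$ (i,j)" ..
qed (use assms in auto)

lemma linear_map_entry_expansion:
  assumes L: "linear_map d M" and C: "\<forall>A\<in>carrier_mat d d. M A \<in> carrier_mat d d"
    and R: "\<rho> \<in> carrier_mat d d" and ij: "i < d" "j < d"
  shows "M \<rho> $$ (i,j) = (\<Sum>a<d. \<Sum>b<d. \<rho> $$ (a,b) * M (ketbra d a b) $$ (i,j))"
proof -
  have "M \<rho> = msum d (\<lambda>x. M ((\<lambda>(a,b). \<rho> $$ (a,b) \<cdot>\<^sub>m ketbra d a b) x)) ({..<d} \<times> {..<d})"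
    by (subst msum_ketbra_expansion[OF R], rule linear_map_msum[OF L C]) auto
  then have expand: "M \<rho> $$ (i,j) =
      (\<Sum>x\<in>{..<d} \<times> {..<d}. M ((\<lambda>(a,b). \<rho> $$ (a,b) \<cdot>\<^sub>m ketbra d a b) x) $$ (i,j))"
    by (simp add: msum_entry ij)
  have "M (c \<cdot>\<^sub>m ketbra d a b) = c \<cdot>\<^sub>m M (ketbra d a b)" for c a b
    using L unfolding linear_map_def by simp
  moreover have "dim_row (M (ketbra d a b)) = d" "dim_col (M (ketbra d a b)) = d" for a b
  proof -
    have "M (ketbra d a b) \<in> carrier_mat d d" using C by simp
    then show "dim_row (M (ketbra d a b)) = d" "dim_col (M (ketbra d a b)) = d" by auto
  qed
  ultimately show ?thesis
    unfolding expand sum.cartesian_product using ij by (intro sum.cong refl) auto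
qed

section \<open>Multiphase covariance\<close>

lemma separating_phase:
  fixes i j a b :: nat
  assumes "\<not> ((i = a \<and> j = b) \<or> (i = j \<and> a = b))"
  shows "\<exists>s. (if i = s then \<i> else 1) * cnj (if j = s then \<i> else 1)
           \<noteq> (if a = s then \<i> else 1) * cnj (if b = s then \<i> else (1::complex))"
proof (cases "i = j")
  case True
  then have "a \<noteq> b" using assms by auto
  then show ?thesis using True by (intro exI[of _ a]) (auto simp: complex_eq_iff)
next
  case False
  show ?thesis
  proof (cases "a = i \<and> b \<noteq> i")
    case True
    then have "j \<noteq> b" using assms by auto
    then show ?thesis using True False by (intro exI[of _ j]) (auto simp: complex_eq_iff)
  next
    case _: False
    then show ?thesis using \<open>i \<noteq> j\<close> by (intro exI[of _ i]) (auto simp: complex_eq_iff)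
  qed
qed

text \<open>A phase \<open>\<pi>/2\<close> on one well-chosen index already separates the characters by which
  \<open>|a\<rangle>\<langle>b|\<close> and the \<open>(i,j)\<close> entry transform.\<close>
lemma covariant_ketbra_entry_zero:
  assumes cov: "multiphase_covariant d M" and L: "linear_map d M"
    and C: "\<forall>A\<in>carrier_mat d d. M A \<in> carrier_mat d d"
    and idx: "a < d" "b < d" "i < d" "j < d"
    and off: "\<not> ((i = a \<and> j = b) \<or> (i = j \<and> a = b))"
  shows "M (ketbra d a b) $$ (i,j) = 0"
proof -
  obtain s where s: "(if i = s then \<i> else 1) * cnj (if j = s then \<i> else 1)
           \<noteq> (if a = s then \<i> else 1) * cnj (if b = s then \<i> else (1::complex))"
    using separating_phase[OF off] by blast
  define \<theta> where "\<theta> k = (if k = s then pi/2 else (0::real))" for k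
  have cis_\<theta>: "cis (\<theta> k) = (if k = s then \<i> else 1)" for k unfolding \<theta>_def by simp
  have \<theta>_range: "\<forall>k<d. 0 \<le> \<theta> k \<and> \<theta> k < 2*pi" unfolding \<theta>_def using pi_gt_zero by auto
  let ?U = "phaseU d \<theta>"
  let ?X = "M (ketbra d a b)"
  let ?c = "cis (\<theta> a) * cnj (cis (\<theta> b))"
  have X: "?X \<in> carrier_mat d d" using C by simp
  have "?U * ketbra d a b * dag ?U = ?c \<cdot>\<^sub>m ketbra d a b"
  proof (rule eq_matI)
    fix x y assume "x < dim_row (?c \<cdot>\<^sub>m ketbra d a b)" "y < dim_col (?c \<cdot>\<^sub>m ketbra d a b)"
    then have xy: "x < d" "y < d" by auto
    show "(?U * ketbra d a b * dag ?U) $$ (x,y) = (?c \<cdot>\<^sub>m ketbra d a b) $$ (x,y)"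
      using phaseU_conj_entry[OF ketbra_carrier xy, of \<theta> a b] xy by (simp add: ketbra_entry)
  qed simp_all
  moreover have "M (?c \<cdot>\<^sub>m ketbra d a b) = ?c \<cdot>\<^sub>m ?X"
    using L unfolding linear_map_def by simp
  ultimately have "?U * ?X * dag ?U = ?c \<cdot>\<^sub>m ?X"
    using cov \<theta>_range unfolding multiphase_covariant_def by simp
  then have "(?U * ?X * dag ?U) $$ (i,j) = (?c \<cdot>\<^sub>m ?X) $$ (i,j)" by simp
  then have "cis (\<theta> i) * ?X $$ (i,j) * cnj (cis (\<theta> j)) = ?c * ?X $$ (i,j)"
    using phaseU_conj_entry[OF X idx(3,4)] X idx by simp
  then have "?X $$ (i,j) * (cis (\<theta> i) * cnj (cis (\<theta> j)) - ?c) = 0"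
    by (simp add: algebra_simps)
  then show ?thesis using s unfolding cis_\<theta> by simp
qed

definition schur_classical_form ::
    "nat \<Rightarrow> (complex mat \<Rightarrow> complex mat) \<Rightarrow>
      (nat \<Rightarrow> nat \<Rightarrow> complex) \<Rightarrow> (nat \<Rightarrow> nat \<Rightarrow> complex) \<Rightarrow> bool" where
  "schur_classical_form d M S P \<longleftrightarrow>
   (\<forall>\<rho>\<in>carrier_mat d d :: complex mat set. M \<rho> \<in> carrier_mat d d \<and>
     (\<forall>a<d. \<forall>b<d. M \<rho> $$ (a,b) = S a b * \<rho> $$ (a,b) +
        (if a = b then (\<Sum>k\<in>{..<d} - {a}. P a k * \<rho> $$ (k,k)) else 0)))"

lemma covariant_schur_classical_form:
  assumes cov: "multiphase_covariant d M" and L: "linear_map d M"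
    and C: "\<forall>A\<in>carrier_mat d d. M A \<in> carrier_mat d d"
  shows "schur_classical_form d M (\<lambda>a b. M (ketbra d a b) $$ (a,b)) (\<lambda>a k. M (ketbra d k k) $$ (a,a))"
proof -
  have "M \<rho> $$ (a,b) = M (ketbra d a b) $$ (a,b) * \<rho> $$ (a,b) +
      (if a = b then (\<Sum>k\<in>{..<d} - {a}. M (ketbra d k k) $$ (a,a) * \<rho> $$ (k,k)) else 0)"
    if R: "\<rho> \<in> carrier_mat d d" and ab: "a < d" "b < d" for \<rho> a b
  proof -
    let ?T = "\<lambda>x y. \<rho> $$ (x,y) * M (ketbra d x y) $$ (a,b)"
    let ?S = "\<rho> $$ (a,b) * M (ketbra d a b) $$ (a,b)"
    let ?P = "\<lambda>x. if a = b \<and> x \<noteq> a then \<rho> $$ (x,x) * M (ketbra d x x) $$ (a,a) else 0"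
    have split_term:
      "?T x y = (if y = b then (if x = a then ?S else 0) else 0) + (if y = x then ?P x else 0)"
      if "x < d" "y < d" for x y
      using covariant_ketbra_entry_zero[OF cov L C that ab] by auto
    have "M \<rho> $$ (a,b) = (\<Sum>x<d. \<Sum>y<d. ?T x y)"
      by (rule linear_map_entry_expansion[OF L C R ab])
    also have "\<dots> = (\<Sum>x<d. (if x = a then ?S else 0) + ?P x)"
      using ab by (intro sum.cong refl) (simp add: split_term sum.distrib)
    also have "\<dots> = ?S +
        (if a = b then (\<Sum>k\<in>{..<d} - {a}. \<rho> $$ (k,k) * M (ketbra d k k) $$ (a,a)) else 0)"
      using ab by (simp add: sum.distrib sum_lessThan_if_neq)
    finally show ?thesis by (simp add: mult.commute)
  qed
  then show ?thesis using C unfolding schur_classical_form_def by blast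
qed

lemma schur_classical_form_covariant:
  assumes form: "schur_classical_form d M S P"
  shows "multiphase_covariant d M"
  unfolding multiphase_covariant_def
proof (intro allI impI ballI)
  fix \<theta> :: "nat \<Rightarrow> real" and \<rho> :: "complex mat" assume R: "\<rho> \<in> carrier_mat d d"
  let ?U = "phaseU d \<theta>"
  let ?\<rho>' = "?U * \<rho> * dag ?U"
  have R': "?\<rho>' \<in> carrier_mat d d" using R by simp
  have MR: "M \<rho> \<in> carrier_mat d d" "M ?\<rho>' \<in> carrier_mat d d"
    using form R R' unfolding schur_classical_form_def by blast+
  have entry: "M \<sigma> $$ (a,b) = S a b * \<sigma> $$ (a,b) +
      (if a = b then (\<Sum>k\<in>{..<d} - {a}. P a k * \<sigma> $$ (k,k)) else 0)"
    if "\<sigma> \<in> carrier_mat d d" "a < d" "b < d" for \<sigma> a b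
    using form that unfolding schur_classical_form_def by blast
  have cis_cnj_cis: "cis x * cnj (cis x) = 1" for x
    by (simp add: cis_cnj cis_mult)
  have cis_cancel: "cis x * y * cnj (cis x) = y" for x y
    using cis_cnj_cis[of x] by (simp add: ac_simps)
  show "?U * M \<rho> * dag ?U = M ?\<rho>'"
  proof (rule eq_matI)
    fix a b assume "a < dim_row (M ?\<rho>')" "b < dim_col (M ?\<rho>')"
    then have ab: "a < d" "b < d" using MR by auto
    have populations: "(\<Sum>k\<in>{..<d} - {a}. P a k * ?\<rho>' $$ (k,k)) = (\<Sum>k\<in>{..<d} - {a}. P a k * \<rho> $$ (k,k))"
      by (intro sum.cong refl) (simp del: index_mult_mat add: phaseU_conj_entry[OF R] cis_cancel)
    have "(?U * M \<rho> * dag ?U) $$ (a,b) = cis (\<theta> a) * M \<rho> $$ (a,b) * cnj (cis (\<theta> b))"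
      by (rule phaseU_conj_entry[OF MR(1) ab])
    also have "\<dots> = M ?\<rho>' $$ (a,b)"
      unfolding entry[OF R ab] entry[OF R' ab] populations phaseU_conj_entry[OF R ab]
      by (cases "a = b") (simp_all add: cis_cancel cis_cnj_cis algebra_simps)
    finally show "(?U * M \<rho> * dag ?U) $$ (a,b) = M ?\<rho>' $$ (a,b)" .
  qed (use MR in auto)
qed

section \<open>Complete positivity\<close>

text \<open>The unnormalised projector onto \<open>\<Sum>\<^sub>k |k\<rangle> \<otimes> |k\<rangle>\<close>; the index of \<open>|a\<rangle> \<otimes> |i\<rangle>\<close> is \<open>a d + i\<close>,
  matching the block layout of \<open>ampl\<close>.\<close>
definition omega_mat :: "nat \<Rightarrow> complex mat" where
  "omega_mat d = mat (d*d) (d*d) (\<lambda>(r,c). if r mod d = r div d \<and> c mod d = c div d then 1 else 0)"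

lemma block_index_less:
  fixes a i d :: nat
  assumes "a < d" "i < d"
  shows "a*d + i < d*d"
proof -
  have "a*d + i < Suc a * d" using assms by simp
  also have "\<dots> \<le> d * d" using mult_le_mono1[of "Suc a" d d] assms by simp
  finally show ?thesis .
qed

lemma psd_omega_mat: "psd (d*d) (omega_mat d)"
  unfolding psd_iff_psd_kernel psd_kernel_def
proof (intro conjI allI)
  show "omega_mat d \<in> carrier_mat (d*d) (d*d)" unfolding omega_mat_def by simp
  fix v :: "nat \<Rightarrow> complex"
  let ?diag = "\<lambda>r::nat. r mod d = r div d"
  define S where "S = (\<Sum>c<d*d. if ?diag c then v c else 0)"
  have "quad_form (d*d) (\<lambda>i j. omega_mat d $$ (i,j)) v =
      (\<Sum>i<d*d. \<Sum>j<d*d. (if ?diag i then cnj (v i) else 0) * (if ?diag j then v j else 0))"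
    unfolding quad_form_def omega_mat_def by (intro sum.cong refl) auto
  also have "\<dots> = (\<Sum>i<d*d. if ?diag i then cnj (v i) else 0) * S"
    unfolding S_def by (simp add: sum_product)
  also have "(\<Sum>i<d*d. if ?diag i then cnj (v i) else 0) = cnj S"
    unfolding S_def cnj_sum by (intro sum.cong refl) auto
  finally have "quad_form (d*d) (\<lambda>i j. omega_mat d $$ (i,j)) v = cnj S * S" .
  then show "Im (quad_form (d*d) (\<lambda>i j. omega_mat d $$ (i,j)) v) = 0"
    "Re (quad_form (d*d) (\<lambda>i j. omega_mat d $$ (i,j)) v) \<ge> 0"
    by simp_all
qed

lemma ampl_omega_mat_entry:
  assumes "a < d" "b < d" "i < d" "j < d"
  shows "ampl d d M (omega_mat d) $$ (a*d + i, b*d + j) = M (ketbra d a b) $$ (i,j)"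
proof -
  have "mat d d (\<lambda>(i',j'). omega_mat d $$ (a*d + i', b*d + j')) = ketbra d a b"
    using assms block_index_less[OF assms(1)] block_index_less[OF assms(2)]
    by (intro eq_matI) (auto simp: omega_mat_def ketbra_entry)
  then show ?thesis
    using assms block_index_less[OF assms(1,3)] block_index_less[OF assms(2,4)]
    by (simp add: ampl_def)
qed

lemma completely_positive_choi_psd_kernel:
  assumes "completely_positive d M" "d > 0"
  shows "psd_kernel (d*d) (\<lambda>r c. ampl d d M (omega_mat d) $$ (r,c))"
proof -
  have "psd (d*d) (ampl d d M (omega_mat d))"
    using assms psd_omega_mat unfolding completely_positive_def by blast
  then show ?thesis unfolding psd_iff_psd_kernel by blast
qed

lemma completely_positive_coherence_psd_kernel:
  assumes CP: "completely_positive d M"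
  shows "psd_kernel d (\<lambda>a b. M (ketbra d a b) $$ (a,b))"
proof (cases "d = 0")
  case True
  then show ?thesis unfolding psd_kernel_def quad_form_def by simp
next
  case False
  have "inj_on (\<lambda>a. a*d + a) {..<d}"
  proof (rule inj_onI)
    fix a b assume "a*d + a = b*d + b"
    then have "a * Suc d = b * Suc d" by (simp add: algebra_simps)
    then show "a = b" by (simp del: mult_Suc_right)
  qed
  moreover have "(\<lambda>a. a*d + a) ` {..<d} \<subseteq> {..<d*d}"
    using block_index_less by auto
  ultimately have "psd_kernel d (\<lambda>a b. ampl d d M (omega_mat d) $$ (a*d + a, b*d + b))"
    using psd_kernel_reindex[OF completely_positive_choi_psd_kernel[OF CP]] False by simp
  then show ?thesis
    by (rule psd_kernel_cong) (simp add: ampl_omega_mat_entry)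
qed

lemma completely_positive_population_nonneg:
  assumes CP: "completely_positive d M" and "j < d" "k < d"
  shows "Im (M (ketbra d k k) $$ (j,j)) = 0" "Re (M (ketbra d k k) $$ (j,j)) \<ge> 0"
  using psd_kernel_diag[OF completely_positive_choi_psd_kernel[OF CP] block_index_less[OF assms(3,2)]]
    ampl_omega_mat_entry[OF assms(3,3,2,2)] assms(2)
  by simp_all

section \<open>Diagonal Kraus representations\<close>

definition diag_kraus_rep ::
    "nat \<Rightarrow> nat \<Rightarrow> (nat \<Rightarrow> complex mat) \<Rightarrow> (nat \<Rightarrow> nat \<Rightarrow> real) \<Rightarrow> complex mat \<Rightarrow> complex mat" where
  "diag_kraus_rep d r Ms p \<rho> = msum d (\<lambda>i. Ms i * \<rho> * dag (Ms i)) {..<r}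
     + msum d (\<lambda>(k,j). complex_of_real (p j k) \<cdot>\<^sub>m (ketbra d j k * \<rho> * ketbra d k j))
         {(k,j). k < d \<and> j < d \<and> j \<noteq> k}"

lemma diag_kraus_rep_schur_classical_form:
  assumes Ms: "\<forall>i<r. Ms i \<in> carrier_mat d d \<and> diagonal_mat (Ms i)"
  shows "schur_classical_form d (diag_kraus_rep d r Ms p)
    (\<lambda>a b. \<Sum>i<r. Ms i $$ (a,a) * cnj (Ms i $$ (b,b))) (\<lambda>a k. complex_of_real (p a k))"
  unfolding schur_classical_form_def
proof (intro ballI conjI allI impI)
  fix \<rho> :: "complex mat" assume R: "\<rho> \<in> carrier_mat d d"
  show "diag_kraus_rep d r Ms p \<rho> \<in> carrier_mat d d"
    unfolding diag_kraus_rep_def by simp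
  fix a b assume ab: "a < d" "b < d"
  have kraus: "msum d (\<lambda>i. Ms i * \<rho> * dag (Ms i)) {..<r} $$ (a,b) =
      (\<Sum>i<r. Ms i $$ (a,a) * cnj (Ms i $$ (b,b))) * \<rho> $$ (a,b)"
    unfolding msum_entry[OF ab] sum_distrib_right
    by (intro sum.cong refl) (simp add: diagonal_conj_entry[OF _ _ R ab] Ms)
  have jump: "(complex_of_real (p j k) \<cdot>\<^sub>m (ketbra d j k * \<rho> * ketbra d k j)) $$ (a,b) =
      (if a = b \<and> j = a then complex_of_real (p a k) * \<rho> $$ (k,k) else 0)"
    if "j < d" "k < d" for j k
  proof -
    have "ketbra d j k * \<rho> * ketbra d k j \<in> carrier_mat d d"
      using R by (metis ketbra_carrier mult_carrier_mat)
    then show ?thesis using ab by (auto simp: ketbra_conj_entry[OF R that ab])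
  qed
  have pairs: "{(k,j). k < d \<and> j < d \<and> j \<noteq> k} = Sigma {..<d} (\<lambda>k. {..<d} - {k})" by auto
  have "msum d (\<lambda>(k,j). complex_of_real (p j k) \<cdot>\<^sub>m (ketbra d j k * \<rho> * ketbra d k j))
        {(k,j). k < d \<and> j < d \<and> j \<noteq> k} $$ (a,b) =
      (\<Sum>k<d. \<Sum>j\<in>{..<d} - {k}. if a = b \<and> j = a then complex_of_real (p a k) * \<rho> $$ (k,k) else 0)"
    unfolding msum_entry[OF ab] pairs by (subst sum.Sigma) (auto intro!: sum.cong simp: jump)
  also have "\<dots> = (\<Sum>k<d. if k \<noteq> a then (if a = b then complex_of_real (p a k) * \<rho> $$ (k,k) else 0) else 0)"
    using ab by (intro sum.cong refl) (auto simp: sum.If_cases)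
  also have "\<dots> = (if a = b then (\<Sum>k\<in>{..<d} - {a}. complex_of_real (p a k) * \<rho> $$ (k,k)) else 0)"
    unfolding sum_lessThan_if_neq by simp
  finally show "diag_kraus_rep d r Ms p \<rho> $$ (a,b) =
      (\<Sum>i<r. Ms i $$ (a,a) * cnj (Ms i $$ (b,b))) * \<rho> $$ (a,b) +
      (if a = b then (\<Sum>k\<in>{..<d} - {a}. complex_of_real (p a k) * \<rho> $$ (k,k)) else 0)"
    unfolding diag_kraus_rep_def using ab by (simp add: kraus)
qed

lemma diag_kraus_rep_covariant:
  assumes "\<forall>i<r. Ms i \<in> carrier_mat d d \<and> diagonal_mat (Ms i)"
    and "\<forall>\<rho>\<in>carrier_mat d d. M \<rho> = diag_kraus_rep d r Ms p \<rho>"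
  shows "multiphase_covariant d M"
proof (rule schur_classical_form_covariant)
  show "schur_classical_form d M
      (\<lambda>a b. \<Sum>i<r. Ms i $$ (a,a) * cnj (Ms i $$ (b,b))) (\<lambda>a k. complex_of_real (p a k))"
    using diag_kraus_rep_schur_classical_form[OF assms(1), of p] assms(2)
    unfolding schur_classical_form_def by simp
qed

lemma schur_classical_form_unique:
  assumes "schur_classical_form d M S P" "schur_classical_form d N S' P'"
    and "\<And>a b. a < d \<Longrightarrow> b < d \<Longrightarrow> S a b = S' a b"
    and "\<And>a k. a < d \<Longrightarrow> k < d \<Longrightarrow> k \<noteq> a \<Longrightarrow> P a k = P' a k"
    and R: "\<rho> \<in> carrier_mat d d"
  shows "M \<rho> = N \<rho>"
proof -
  have MN: "M \<rho> \<in> carrier_mat d d" "N \<rho> \<in> carrier_mat d d"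
    using assms(1,2) R unfolding schur_classical_form_def by blast+
  show ?thesis
  proof (rule eq_matI)
    fix a b assume "a < dim_row (N \<rho>)" "b < dim_col (N \<rho>)"
    then have ab: "a < d" "b < d" using MN by auto
    have "(if a = b then \<Sum>k\<in>{..<d} - {a}. P a k * \<rho> $$ (k,k) else 0) =
        (if a = b then \<Sum>k\<in>{..<d} - {a}. P' a k * \<rho> $$ (k,k) else 0)"
      using assms(4) ab by (auto intro: sum.cong)
    then show "M \<rho> $$ (a,b) = N \<rho> $$ (a,b)"
      using assms(1,2) R ab assms(3)[OF ab] unfolding schur_classical_form_def by simp
  qed (use MN in auto)
qed

lemma covariant_channel_diag_kraus_rep:
  assumes channel: "quantum_channel d M" and cov: "multiphase_covariant d M"
  obtains r Ms p where "\<forall>i<r. Ms i \<in> carrier_mat d d \<and> diagonal_mat (Ms i)"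
    and "\<forall>j<d. \<forall>k<d. j \<noteq> k \<longrightarrow> p j k \<ge> 0"
    and "\<forall>\<rho>\<in>carrier_mat d d. M \<rho> = diag_kraus_rep d r Ms p \<rho>"
proof -
  have C: "\<forall>A\<in>carrier_mat d d. M A \<in> carrier_mat d d" and L: "linear_map d M"
    and CP: "completely_positive d M"
    using channel unfolding quantum_channel_def by auto
  let ?S = "\<lambda>a b. M (ketbra d a b) $$ (a,b)"
  obtain r :: nat and m where gram: "\<forall>a<d. \<forall>b<d. ?S a b = (\<Sum>i<r. m i a * cnj (m i b))"
    using psd_kernel_gram[OF completely_positive_coherence_psd_kernel[OF CP]]
    unfolding gram_kernel_def by blast
  define Ms where "Ms i = mat d d (\<lambda>(a,b). if a = b then m i a else 0)" for i
  define p where "p j k = Re (M (ketbra d k k) $$ (j,j))" for j k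
  have Ms: "\<forall>i<r. Ms i \<in> carrier_mat d d \<and> diagonal_mat (Ms i)"
    unfolding Ms_def diagonal_mat_def by simp
  have p_nonneg: "\<forall>j<d. \<forall>k<d. j \<noteq> k \<longrightarrow> p j k \<ge> 0"
    unfolding p_def using completely_positive_population_nonneg(2)[OF CP] by simp
  have "M \<rho> = diag_kraus_rep d r Ms p \<rho>" if "\<rho> \<in> carrier_mat d d" for \<rho>
  proof (rule schur_classical_form_unique[OF
        covariant_schur_classical_form[OF cov L C] diag_kraus_rep_schur_classical_form[OF Ms] _ _ that])
    show "?S a b = (\<Sum>i<r. Ms i $$ (a,a) * cnj (Ms i $$ (b,b)))" if "a < d" "b < d" for a b
      using gram that by (simp add: Ms_def)
    show "M (ketbra d k k) $$ (a,a) = complex_of_real (p a k)" if "a < d" "k < d" for a k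
      using completely_positive_population_nonneg[OF CP that] by (simp add: p_def complex_eq_iff)
  qed
  then show ?thesis using that Ms p_nonneg by blast
qed

theorem mainTheorem8:
  fixes d :: nat and \<M> :: "complex mat \<Rightarrow> complex mat"
  assumes "quantum_channel d \<M>"
  shows "multiphase_covariant d \<M> \<longleftrightarrow>
    (\<exists>(r::nat) (Ms :: nat \<Rightarrow> complex mat) (p :: nat \<Rightarrow> nat \<Rightarrow> real).
       (\<forall>i<r. Ms i \<in> carrier_mat d d \<and> diagonal_mat (Ms i)) \<and>
       (\<forall>j<d. \<forall>k<d. j \<noteq> k \<longrightarrow> p j k \<ge> 0) \<and>
       (\<forall>\<rho>\<in>carrier_mat d d.
          \<M> \<rho> = msum d (\<lambda>i. Ms i * \<rho> * dag (Ms i)) {..<r}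
                + msum d (\<lambda>(k,j). complex_of_real (p j k) \<cdot>\<^sub>m
                      (ketbra d j k * \<rho> * ketbra d k j))
                    {(k,j). k < d \<and> j < d \<and> j \<noteq> k}))"
  unfolding diag_kraus_rep_def[symmetric]
  by (rule iffI, erule covariant_channel_diag_kraus_rep[OF assms], blast,
      elim exE conjE, rule diag_kraus_rep_covariant)

end
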